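(* In the setting described in the context, $$\sigma_{\mathrm{noise}}^2=\lambda_{\max}(\Sigma_{\varepsilon,\mathrm{cent}})\le\mathrm{tr}(\Sigma_{\varepsilon,\mathrm{cent}})\le\mathbb{E}\|\varepsilon_s\|_2^2=\mathbb{E}\,D(\bar w^{(s)})^2,$$ and the right-hand side equals $\sum_{j=1}^{d-1}\left(\frac{\eta\sigma^2}{2\lambda_j-\eta\lambda_j^2}\right)\frac{1}{N^2}\left[N+2\sum_{r=1}^{N-1}(N-r)(1-\eta\lambda_j)^{rT}\right]$.
   Context: Let $d\ge2$, $v\in\mathbb{R}^d$ a unit vector, $P_F=vv^\top$, $P_S=I-vv^\top$, $w_\star\in\mathbb{R}^d$. The loss is $L(w)=\ell(v^\top(w-w_\star))+\tfrac12\|H^{1/2}P_S(w-w_\star)\|_2^2$ with $\ell\in C^2(\mathbb{R})$, $H$ symmetric PSD, $HP_F=0$, $HP_S=P_SH=H$, and eigenvalues $\lambda_1,\dots,\lambda_{d-1}$ of $H$ on $\mathrm{range}(P_S)$ in $[\mu,L_S]$, $0<\mu\le L_S$. SGD: $w_{k+1}=w_k-\eta\nabla L(w_k)-\eta\mu_Fv+\eta g_k$ with $\eta\in(0,2/L_S)$, $\mu_F>0$, $(g_k)$ i.i.d. $\mathcal N(0,\sigma^2P_S)$; the mountain coordinates $P_S(w_k-w_\star)$ are stationary for $k\ge k_0$. Checkpoints $w^{(m)}=w_{k_0+mT}$; sliding-window merges $\bar w^{(s)}=\frac1N\sum_{i=0}^{N-1}w^{(s+i)}$, $s=0,\dots,K-1$;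 $\varepsilon_s=P_S(\bar w^{(s)}-w_\star)$, $\tilde\varepsilon_s=\varepsilon_s-\frac1K\sum_{r=0}^{K-1}\varepsilon_r$; $D(w)=\|P_S(w-w_\star)\|_2$; $\Sigma_{\varepsilon,\mathrm{cent}}:=\mathbb{E}[\tilde\varepsilon_s\tilde\varepsilon_s^\top]$ and $\sigma_{\mathrm{noise}}^2:=\lambda_{\max}(\Sigma_{\varepsilon,\mathrm{cent}})$, where expectations are taken jointly over the SGD noise and an index $s$ uniform on $\{0,\dots,K-1\}$. *)

theory Defs
  imports "HOL-Probability.Probability"
begin

definition outer :: "real^'n \<Rightarrow> real^'n \<Rightarrow> real^'n^'n" where
  "outer a b = (\<chi> i j. a $ i * b $ j)"

definition PF :: "real^'n \<Rightarrow> real^'n^'n" where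
  "PF v = outer v v"

definition PS :: "real^'n \<Rightarrow> real^'n^'n" where
  "PS v = mat 1 - outer v v"

text \<open>The loss L(w) = l(v^T(w-w*)) + 1/2 ||H^(1/2) P_S (w-w*)||^2, where
  ||H^(1/2) y||^2 is written as y^T H y.\<close>
definition lossL :: "(real \<Rightarrow> real) \<Rightarrow> real^'n \<Rightarrow> real^'n^'n \<Rightarrow> real^'n \<Rightarrow> real^'n \<Rightarrow> real" where
  "lossL l v H wstar w =
     l (v \<bullet> (w - wstar)) + 1/2 * ((PS v *v (w - wstar)) \<bullet> (H *v (PS v *v (w - wstar))))"

definition lambda_max :: "real^'n^'n \<Rightarrow> real" where
  "lambda_max A = Max {c. \<exists>x. x \<noteq> 0 \<and> A *v x = c *\<^sub>R x}"

definition Dist :: "real^'n \<Rightarrow> real^'n \<Rightarrow> real^'n \<Rightarrow> real" where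
  "Dist v wstar w = norm (PS v *v (w - wstar))"

end

theory Submission
  imports Defs
begin

(*
  The mountain error e_k = P_S (w_k - w_star) does not see the loss l: P_S annihilates v and
  P_S grad L(w) = H (w - w_star), so e_(k+1) = (I - eta H) e_k + eta P_S g_k.  In an orthonormal
  eigenbasis u_j of H on the complement of v, every coordinate b_k = u_j . e_k is a scalar AR(1)
  process b_(k+1) = c b_k + xi_k with c = 1 - eta lambda_j and independent N(0, (eta sigma)^2)
  innovations xi_k.  Stationarity forces the characteristic function of b_k to satisfy
  phi(t) = phi(c t) exp(-(eta sigma t)^2 / 2), whose only solution continuous at 0 is the Gaussian
  one with variance (eta sigma)^2 / (1 - c^2) = eta sigma^2 / (2 lambda_j - eta lambda_j^2); then
  E b_k b_(k+m) = c^m times this variance.  Averaging N checkpoints T steps apart and summing over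
  j (Parseval) gives E ||eps_s||^2.  Centering over s can only decrease the mean square, the trace
  of the second-moment matrix is the centered mean square, and by Cauchy-Schwarz every eigenvalue
  of that matrix is at most its trace.
*)

section \<open>The projection onto the mountain directions and the loss gradient\<close>

lemma PS_mult_vec: "PS v *v x = x - (v \<bullet> x) *\<^sub>R v"
  unfolding PS_def outer_def
  by (simp add: vec_eq_iff matrix_vector_mult_def inner_vec_def sum_subtractf
      sum_distrib_left mat_def algebra_simps if_distrib[of "\<lambda>a. _ * a"] cong: if_cong)

lemma inner_PS_commute: "(PS v *v x) \<bullet> y = x \<bullet> (PS v *v y)"
  by (simp add: PS_mult_vec inner_diff_left inner_diff_right inner_commute)

lemma inner_matrix_symmetric:
  fixes A :: "real^'n^'n"
  assumes "transpose A = A"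
  shows "(A *v x) \<bullet> y = x \<bullet> (A *v y)"
  by (metis assms dot_lmul_matrix vector_transpose_matrix inner_commute)

lemma lossL_eq_quadratic:
  assumes H_PS: "H ** PS v = H" and PS_H: "PS v ** H = H"
  shows "lossL l v H wstar y = l (v \<bullet> (y - wstar)) + 1/2 * ((y - wstar) \<bullet> (H *v (y - wstar)))"
proof -
  have "(PS v *v z) \<bullet> (H *v (PS v *v z)) = z \<bullet> (H *v z)" for z
  proof -
    have "(PS v *v z) \<bullet> (H *v (PS v *v z)) = z \<bullet> (PS v *v (H *v z))"
      by (simp add: matrix_vector_mul_assoc H_PS inner_PS_commute)
    also have "\<dots> = z \<bullet> (H *v z)"
      by (simp add: matrix_vector_mul_assoc PS_H)
    finally show ?thesis .
  qed
  then show ?thesis by (simp add: lossL_def)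
qed

lemma has_derivative_lossL:
  fixes H :: "real^'n^'n"
  assumes l_deriv: "\<And>t. (l has_real_derivative l' t) (at t)"
    and H_sym: "transpose H = H" and H_PS: "H ** PS v = H" and PS_H: "PS v ** H = H"
  shows "(lossL l v H wstar has_derivative
           (\<lambda>h. (l' (v \<bullet> (x - wstar)) *\<^sub>R v + H *v (x - wstar)) \<bullet> h)) (at x)"
proof -
  have lin: "bounded_linear (\<lambda>h. H *v h)" by (simp add: matrix_vector_mul_bounded_linear)
  have "((\<lambda>y. v \<bullet> (y - wstar)) has_derivative (\<lambda>h. v \<bullet> h)) (at x)"
    by (auto intro!: derivative_eq_intros)
  from has_derivative_compose[OF this l_deriv[unfolded has_field_derivative_def]]
  have outer: "((\<lambda>y. l (v \<bullet> (y - wstar))) has_derivative (\<lambda>h. l' (v \<bullet> (x - wstar)) * (v \<bullet> h))) (at x)"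
    by (simp add: o_def)
  have "((\<lambda>y. l (v \<bullet> (y - wstar)) + 1/2 * ((y - wstar) \<bullet> (H *v (y - wstar)))) has_derivative
      (\<lambda>h. l' (v \<bullet> (x - wstar)) * (v \<bullet> h)
         + 1/2 * (h \<bullet> (H *v (x - wstar)) + (x - wstar) \<bullet> (H *v h)))) (at x)"
    by (auto intro!: derivative_eq_intros outer bounded_linear.has_derivative[OF lin]
             simp: matrix_vector_mult_diff_distrib)
  moreover have "(x - wstar) \<bullet> (H *v h) = h \<bullet> (H *v (x - wstar))" for h
    by (simp add: inner_matrix_symmetric[OF H_sym, symmetric] inner_commute)
  ultimately show ?thesis
    by (simp add: lossL_eq_quadratic[OF H_PS PS_H, abs_def] inner_add_right inner_commute)
qed

lemma gradient_unique:
  fixes a b :: "'a::real_inner"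
  assumes "(f has_derivative (\<lambda>h. a \<bullet> h)) (at x)" and "(f has_derivative (\<lambda>h. b \<bullet> h)) (at x)"
  shows "a = b"
proof -
  have "(\<lambda>h. a \<bullet> h) = (\<lambda>h. b \<bullet> h)" using assms by (rule has_derivative_unique)
  then have "(a - b) \<bullet> (a - b) = 0" by (metis inner_diff_left right_minus_eq)
  then show ?thesis by simp
qed

section \<open>Stationary Gaussian AR(1) processes\<close>

lemma char_distr_scale:
  fixes f :: "'a \<Rightarrow> real"
  assumes [measurable]: "f \<in> borel_measurable M"
  shows "char (distr M borel (\<lambda>x. c * f x)) t = char (distr M borel f) (c * t)"
  by (simp add: char_def integral_distr ac_simps)

lemma char_normal_density:
  assumes "0 < \<sigma>"
  shows "char (density lborel (normal_density 0 \<sigma>)) t = exp (- (\<sigma> * t)\<^sup>2 / 2)"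
proof -
  interpret std: prob_space std_normal_distribution
    using prob_space_normal_density[of 1 0] by simp
  have "distributed std_normal_distribution lborel (\<lambda>x. x) std_normal_density"
    by (simp add: distributed_def distr_id2)
  then have "distributed std_normal_distribution lborel (\<lambda>x. 0 + \<sigma> * x) (normal_density 0 \<sigma>)"
    using std.normal_density_affine[of "\<lambda>x. x" 0 1 \<sigma> 0] assms by simp
  then have "density lborel (normal_density 0 \<sigma>) = distr std_normal_distribution borel (\<lambda>x. \<sigma> * x)"
    by (simp add: distributed_distr_eq_density[symmetric] distr_def)
  then show ?thesis
    using char_distr_scale[of "\<lambda>x. x" std_normal_distribution \<sigma> t]
    by (simp add: distr_id2 char_std_normal_distribution)
qed

lemma char_AR1_fixed_point:
  fixes \<phi> :: "real \<Rightarrow> complex" and c s t :: real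
  assumes cont: "isCont \<phi> 0" and one: "\<phi> 0 = 1" and c: "\<bar>c\<bar> < 1"
    and step: "\<And>t. \<phi> t = \<phi> (c * t) * exp (- (s * t)\<^sup>2 / 2)"
  shows "\<phi> t = exp (- (s / sqrt (1 - c\<^sup>2) * t)\<^sup>2 / 2)"
proof -
  define g :: "real \<Rightarrow> real" where "g t = exp (- (s / sqrt (1 - c\<^sup>2) * t)\<^sup>2 / 2)" for t
  \<comment> \<open>g solves the same equation, so \<psi> is invariant under t \<mapsto> c t and hence constant\<close>
  define \<psi> where "\<psi> t = \<phi> t / g t" for t
  have c2: "0 < 1 - c\<^sup>2" using c by (simp add: abs_square_less_1)
  have g_step: "g t = g (c * t) * exp (- (s * t)\<^sup>2 / 2)" for t
  proof -
    have "(s / sqrt (1 - c\<^sup>2) * t)\<^sup>2 = (s / sqrt (1 - c\<^sup>2) * (c * t))\<^sup>2 + (s * t)\<^sup>2"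
      using c2 by (simp add: power_mult_distrib power_divide field_simps)
    then show ?thesis by (simp add: g_def flip: exp_add)
  qed
  have \<psi>_step: "\<psi> t = \<psi> (c * t)" for t
    using step[of t] g_step[of t] by (simp add: \<psi>_def)
  have \<psi>_iter: "\<psi> t = \<psi> (c ^ n * t)" for n
    by (induction n) (simp_all add: \<psi>_step[of "c ^ _ * t"] mult.assoc)
  have "isCont \<psi> 0"
    unfolding \<psi>_def[abs_def] g_def by (intro continuous_intros cont) auto
  moreover have "(\<lambda>n. c ^ n * t) \<longlonglongrightarrow> 0"
    using tendsto_mult_left_zero[OF LIMSEQ_power_zero[of c]] c by simp
  ultimately have "(\<lambda>n. \<psi> (c ^ n * t)) \<longlonglongrightarrow> \<psi> 0"
    by (rule isCont_tendsto_compose)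
  then have "\<psi> t = \<psi> 0"
    by (simp add: \<psi>_iter[symmetric] LIMSEQ_const_iff)
  then show ?thesis by (simp add: \<psi>_def g_def one)
qed

lemma (in prob_space) stationary_AR1_gaussian:
  fixes X \<xi> :: "'a \<Rightarrow> real"
  assumes X[measurable]: "X \<in> borel_measurable M"
    and \<xi>: "distributed M lborel \<xi> (normal_density 0 s)" and s: "0 < s"
    and indep: "indep_var borel X borel \<xi>"
    and stat: "distr M borel (\<lambda>x. c * X x + \<xi> x) = distr M borel X"
    and c: "\<bar>c\<bar> < 1"
  shows "distributed M lborel X (normal_density 0 (s / sqrt (1 - c\<^sup>2)))"
proof -
  have [measurable]: "\<xi> \<in> borel_measurable M" using \<xi> by (simp add: distributed_def)
  have \<xi>_distr: "distr M borel \<xi> = density lborel (normal_density 0 s)"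
    using \<xi> by (simp add: distributed_distr_eq_density[symmetric] distr_def)
  have "indep_var borel (\<lambda>x. c * X x) borel \<xi>"
    using indep_var_compose[OF indep, of "\<lambda>y. c * y" borel id borel] by (simp add: o_def)
  then have step: "char (distr M borel X) t
      = char (distr M borel X) (c * t) * exp (- (s * t)\<^sup>2 / 2)" for t
    using char_distr_add[of "\<lambda>x. c * X x" \<xi> t] char_normal_density[OF s, of t]
    by (simp add: stat \<xi>_distr char_distr_scale)
  have rd: "real_distribution (distr M borel X)" by simp
  define \<tau> where "\<tau> = s / sqrt (1 - c\<^sup>2)"
  have \<tau>: "0 < \<tau>" using c s by (simp add: \<tau>_def abs_square_less_1)
  have "char (distr M borel X) t = exp (- (\<tau> * t)\<^sup>2 / 2)" for t
    unfolding \<tau>_def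
    by (rule char_AR1_fixed_point[OF real_distribution.isCont_char[OF rd]
          real_distribution.char_zero[OF rd] c step])
  then have "char (distr M borel X) = char (density lborel (normal_density 0 \<tau>))"
    by (simp add: fun_eq_iff char_normal_density[OF \<tau>])
  moreover have "real_distribution (density lborel (normal_density 0 \<tau>))"
    using prob_space_normal_density[OF \<tau>] by (auto simp: real_distribution_def real_distribution_axioms_def)
  ultimately have "distr M borel X = density lborel (normal_density 0 \<tau>)"
    using Levy_uniqueness[OF rd] by blast
  then show ?thesis
    by (simp add: distributed_def \<tau>_def distr_def)
qed

section \<open>Second-moment matrices\<close>

definition square_integrable :: "'a measure \<Rightarrow> ('a \<Rightarrow> real) \<Rightarrow> bool" where
  "square_integrable M f \<longleftrightarrow> f \<in> borel_measurable M \<and> integrable M (\<lambda>x. (f x)\<^sup>2)"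

lemma integrable_mult_square_integrable:
  assumes "square_integrable M f" "square_integrable M g"
  shows "integrable M (\<lambda>x. f x * g x)"
proof (rule Bochner_Integration.integrable_bound)
  show "integrable M (\<lambda>x. (f x)\<^sup>2 + (g x)\<^sup>2)"
    using assms unfolding square_integrable_def by auto
  show "(\<lambda>x. f x * g x) \<in> borel_measurable M"
    using assms unfolding square_integrable_def by auto
  have "\<bar>a * b\<bar> \<le> a\<^sup>2 + b\<^sup>2" for a b :: real
    using sum_squares_bound[of "\<bar>a\<bar>" "\<bar>b\<bar>"] mult_nonneg_nonneg[OF abs_ge_zero abs_ge_zero, of a b]
    unfolding abs_mult power2_abs by linarith
  then show "AE x in M. norm (f x * g x) \<le> norm ((f x)\<^sup>2 + (g x)\<^sup>2)"
    by simp
qed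

lemma square_integrable_add:
  assumes "square_integrable M f" "square_integrable M g"
  shows "square_integrable M (\<lambda>x. f x + g x)"
proof -
  have "(\<lambda>x. (f x + g x)\<^sup>2) = (\<lambda>x. (f x)\<^sup>2 + 2 * (f x * g x) + (g x)\<^sup>2)"
    by (simp add: power2_sum algebra_simps)
  then show ?thesis
    using assms integrable_mult_square_integrable[OF assms]
    unfolding square_integrable_def by auto
qed

lemma square_integrable_scale:
  assumes "square_integrable M f"
  shows "square_integrable M (\<lambda>x. c * f x)"
proof -
  have "f \<in> borel_measurable M" using assms by (simp add: square_integrable_def)
  then have "(\<lambda>x. c * f x) \<in> borel_measurable M" by measurable
  then show ?thesis using assms by (simp add: square_integrable_def power_mult_distrib)
qed

lemma square_integrable_diff:
  assumes "square_integrable M f" "square_integrable M g"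
  shows "square_integrable M (\<lambda>x. f x - g x)"
  using square_integrable_add[OF assms(1) square_integrable_scale[OF assms(2), of "-1"]] by simp

lemma square_integrable_sum:
  assumes "\<And>i. i \<in> A \<Longrightarrow> square_integrable M (f i)"
  shows "square_integrable M (\<lambda>x. \<Sum>i\<in>A. f i x)"
proof -
  have "square_integrable M (\<lambda>x. 0)" by (simp add: square_integrable_def)
  with assms show ?thesis
    by (induction A rule: infinite_finite_induct) (simp_all add: square_integrable_add)
qed

lemma square_integrable_inner:
  fixes X :: "'a \<Rightarrow> real^'n"
  assumes "\<And>i. square_integrable M (\<lambda>x. X x $ i)"
  shows "square_integrable M (\<lambda>x. a \<bullet> X x)"
  unfolding inner_vec_def inner_real_def
  by (intro square_integrable_sum square_integrable_scale assms)

lemma integrable_norm_square: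
  fixes X :: "'a \<Rightarrow> real^'n"
  assumes "\<And>i. square_integrable M (\<lambda>x. X x $ i)"
  shows "integrable M (\<lambda>x. (norm (X x))\<^sup>2)"
  unfolding power2_norm_eq_inner inner_vec_def inner_real_def
  using integrable_mult_square_integrable[OF assms assms] by simp

definition second_moment_matrix :: "'a measure \<Rightarrow> nat \<Rightarrow> (nat \<Rightarrow> 'a \<Rightarrow> real^'n) \<Rightarrow> real^'n^'n" where
  "second_moment_matrix M K X = (\<chi> i j. (1 / real K) * (\<Sum>s<K. \<integral>x. X s x $ i * X s x $ j \<partial>M))"

lemma inner_second_moment_matrix:
  fixes X :: "nat \<Rightarrow> 'a \<Rightarrow> real^'n"
  assumes sq: "\<And>s i. square_integrable M (\<lambda>x. X s x $ i)"
  shows "a \<bullet> (second_moment_matrix M K X *v b)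
           = (1 / real K) * (\<Sum>s<K. \<integral>x. (a \<bullet> X s x) * (b \<bullet> X s x) \<partial>M)"
proof -
  have int: "integrable M (\<lambda>x. X s x $ i * X s x $ j)" for s i j
    by (rule integrable_mult_square_integrable[OF sq sq])
  have "(\<lambda>x. (a \<bullet> X s x) * (b \<bullet> X s x))
      = (\<lambda>x. \<Sum>i\<in>UNIV. \<Sum>j\<in>UNIV. a$i * b$j * (X s x $ i * X s x $ j))" for s
    by (simp add: inner_vec_def sum_product algebra_simps)
  then have E: "(\<integral>x. (a \<bullet> X s x) * (b \<bullet> X s x) \<partial>M)
      = (\<Sum>i\<in>UNIV. \<Sum>j\<in>UNIV. a$i * b$j * (\<integral>x. X s x $ i * X s x $ j \<partial>M))" for s
    using int by simp
  have "a \<bullet> (second_moment_matrix M K X *v b)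
      = (\<Sum>i\<in>UNIV. \<Sum>j\<in>UNIV. a$i * b$j * ((1 / real K) * (\<Sum>s<K. \<integral>x. X s x $ i * X s x $ j \<partial>M)))"
    by (simp add: inner_vec_def matrix_vector_mult_def second_moment_matrix_def sum_distrib_left
        algebra_simps)
  also have "\<dots> = (1 / real K) * (\<Sum>s<K. \<Sum>i\<in>UNIV. \<Sum>j\<in>UNIV. a$i * b$j * (\<integral>x. X s x $ i * X s x $ j \<partial>M))"
    by (simp add: sum_distrib_left sum.swap[of _ UNIV "{..<K}"] algebra_simps)
  finally show ?thesis by (simp only: E)
qed

lemma trace_second_moment_matrix:
  fixes X :: "nat \<Rightarrow> 'a \<Rightarrow> real^'n"
  assumes sq: "\<And>s i. square_integrable M (\<lambda>x. X s x $ i)"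
  shows "trace (second_moment_matrix M K X) = (1 / real K) * (\<Sum>s<K. \<integral>x. (norm (X s x))\<^sup>2 \<partial>M)"
proof -
  have "integrable M (\<lambda>x. X s x $ i * X s x $ i)" for s i
    by (rule integrable_mult_square_integrable[OF sq sq])
  then show ?thesis
    by (simp add: trace_def second_moment_matrix_def power2_norm_eq_inner inner_vec_def
        sum_distrib_left sum.swap[of _ UNIV "{..<K}"])
qed

lemma finite_eigenvalues_symmetric:
  fixes A :: "real^'n^'n"
  assumes sym: "\<And>x y. (A *v x) \<bullet> y = x \<bullet> (A *v y)"
  shows "finite {c. \<exists>x. x \<noteq> 0 \<and> A *v x = c *\<^sub>R x}" (is "finite ?E")
proof -
  define e where "e c = (SOME x. x \<noteq> 0 \<and> A *v x = c *\<^sub>R x)" for c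
  have e: "e c \<noteq> 0 \<and> A *v e c = c *\<^sub>R e c" if "c \<in> ?E" for c
  proof -
    have "\<exists>x. x \<noteq> 0 \<and> A *v x = c *\<^sub>R x" using that by simp
    then show ?thesis unfolding e_def by (rule someI_ex)
  qed
  have inj: "inj_on e ?E"
  proof (rule inj_onI)
    fix c c' assume c: "c \<in> ?E" "c' \<in> ?E" and same: "e c = e c'"
    have "c *\<^sub>R e c = A *v e c" using e[OF c(1)] by simp
    also have "\<dots> = c' *\<^sub>R e c" using e[OF c(2)] same by simp
    finally show "c = c'" using e[OF c(1)] by simp
  qed
  have "pairwise orthogonal (e ` ?E)"
  proof (rule pairwiseI)
    fix x y assume "x \<in> e ` ?E" "y \<in> e ` ?E" "x \<noteq> y"
    then obtain c c' where c: "c \<in> ?E" "c' \<in> ?E" "x = e c" "y = e c'" "c \<noteq> c'" by auto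
    have "c * (x \<bullet> y) = (A *v x) \<bullet> y" using e[OF c(1)] c(3) by simp
    also have "\<dots> = x \<bullet> (A *v y)" by (rule sym)
    also have "\<dots> = c' * (x \<bullet> y)" using e[OF c(2)] c(4) by simp
    finally show "orthogonal x y" using c(5) by (simp add: orthogonal_def)
  qed
  moreover have "0 \<notin> e ` ?E" using e by force
  ultimately have "independent (e ` ?E)" by (rule pairwise_orthogonal_independent)
  then have "finite (e ` ?E)" by (rule finiteI_independent)
  then show ?thesis using inj by (rule finite_imageD)
qed

lemma lambda_max_le_symmetric:
  fixes A :: "real^'n^'n"
  assumes sym: "\<And>x y. (A *v x) \<bullet> y = x \<bullet> (A *v y)"
    and eigen: "x \<noteq> 0" "A *v x = c *\<^sub>R x"
    and bound: "\<And>c x. x \<noteq> 0 \<Longrightarrow> A *v x = c *\<^sub>R x \<Longrightarrow> c \<le> b"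
  shows "lambda_max A \<le> b"
proof -
  let ?E = "{c. \<exists>x. x \<noteq> 0 \<and> A *v x = c *\<^sub>R x}"
  have "finite ?E" by (rule finite_eigenvalues_symmetric[OF sym])
  moreover have "?E \<noteq> {}" using eigen by blast
  moreover have "\<forall>c\<in>?E. c \<le> b" using bound by blast
  ultimately show ?thesis unfolding lambda_max_def by simp
qed

lemma lambda_max_second_moment_le_trace:
  fixes X :: "nat \<Rightarrow> 'a \<Rightarrow> real^'n"
  assumes sq: "\<And>s i. square_integrable M (\<lambda>x. X s x $ i)"
    and eigen: "x \<noteq> 0" "second_moment_matrix M K X *v x = c *\<^sub>R x"
  shows "lambda_max (second_moment_matrix M K X) \<le> trace (second_moment_matrix M K X)"
proof (rule lambda_max_le_symmetric[OF _ eigen])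
  let ?S = "second_moment_matrix M K X"
  show "(?S *v a) \<bullet> b = a \<bullet> (?S *v b)" for a b
    using inner_second_moment_matrix[where X=X and K=K and a=b and b=a, OF sq]
      inner_second_moment_matrix[where X=X and K=K and a=a and b=b, OF sq]
    by (simp add: inner_commute mult.commute)
  fix c a assume a: "a \<noteq> 0" "?S *v a = c *\<^sub>R a"
  have "c * (norm a)\<^sup>2 = (1 / real K) * (\<Sum>s<K. \<integral>x. (a \<bullet> X s x) * (a \<bullet> X s x) \<partial>M)"
    using inner_second_moment_matrix[where X=X and K=K and a=a and b=a, OF sq] a(2) by (simp add: power2_norm_eq_inner)
  also have "\<dots> \<le> (1 / real K) * (\<Sum>s<K. \<integral>x. (norm a)\<^sup>2 * (norm (X s x))\<^sup>2 \<partial>M)"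
  proof (intro mult_left_mono sum_mono integral_mono)
    fix s x
    show "integrable M (\<lambda>x. (a \<bullet> X s x) * (a \<bullet> X s x))"
      using square_integrable_inner[where X="X s", OF sq, of a]
      by (intro integrable_mult_square_integrable)
    show "integrable M (\<lambda>x. (norm a)\<^sup>2 * (norm (X s x))\<^sup>2)"
      using integrable_norm_square[OF sq] by simp
    have "\<bar>a \<bullet> X s x\<bar>\<^sup>2 \<le> (norm a * norm (X s x))\<^sup>2"
      using Cauchy_Schwarz_ineq2 by (rule power_mono) simp
    then show "(a \<bullet> X s x) * (a \<bullet> X s x) \<le> (norm a)\<^sup>2 * (norm (X s x))\<^sup>2"
      by (simp add: power2_eq_square power_mult_distrib ac_simps)
  qed simp
  also have "\<dots> = (norm a)\<^sup>2 * trace ?S"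
    by (simp add: trace_second_moment_matrix[OF sq] integrable_norm_square[OF sq] sum_distrib_left)
  finally show "c \<le> trace ?S" using a(1) by simp
qed

lemma sum_norm_centered_le:
  fixes e :: "nat \<Rightarrow> 'a::real_inner"
  shows "(\<Sum>s<K. (norm (e s - (1 / real K) *\<^sub>R (\<Sum>r<K. e r)))\<^sup>2) \<le> (\<Sum>s<K. (norm (e s))\<^sup>2)"
proof (cases "K = 0")
  case False
  define m where "m = (1 / real K) *\<^sub>R (\<Sum>r<K. e r)"
  have sum_e: "(\<Sum>r<K. e r) = real K *\<^sub>R m" unfolding m_def using False by simp
  have "(norm (e s - m))\<^sup>2 = (norm (e s))\<^sup>2 - 2 * (e s \<bullet> m) + (norm m)\<^sup>2" for s
    by (simp add: power2_norm_eq_inner inner_diff_left inner_diff_right inner_commute)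
  then have "(\<Sum>s<K. (norm (e s - m))\<^sup>2) = (\<Sum>s<K. (norm (e s))\<^sup>2) - real K * (norm m)\<^sup>2"
    by (simp add: sum.distrib sum_subtractf flip: inner_sum_left sum_distrib_left)
       (simp add: sum_e power2_norm_eq_inner)
  then show ?thesis unfolding m_def by simp
qed simp

lemma second_moment_centered_bounds:
  fixes X :: "nat \<Rightarrow> 'a \<Rightarrow> real^'n" and K :: nat
  assumes sq: "\<And>s i. square_integrable M (\<lambda>x. X s x $ i)"
    and v: "v \<noteq> 0" "\<And>s x. v \<bullet> X s x = 0"
  defines "C \<equiv> \<lambda>s x. X s x - (1 / real K) *\<^sub>R (\<Sum>r<K. X r x)"
  shows "lambda_max (second_moment_matrix M K C) \<le> trace (second_moment_matrix M K C)"
    and "trace (second_moment_matrix M K C) \<le> (1 / real K) * (\<Sum>s<K. \<integral>x. (norm (X s x))\<^sup>2 \<partial>M)"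
proof -
  let ?S = "second_moment_matrix M K C"
  have sqC: "square_integrable M (\<lambda>x. C s x $ i)" for s i
  proof -
    have "(\<lambda>x. C s x $ i) = (\<lambda>x. X s x $ i - (1 / real K) * (\<Sum>r<K. X r x $ i))"
      by (simp add: C_def sum_component)
    then show ?thesis
      by (simp only:) (intro square_integrable_diff square_integrable_scale square_integrable_sum sq)
  qed
  have vC: "v \<bullet> C s x = 0" for s x
    by (simp add: C_def inner_diff_right inner_sum_right v(2))
  have "(?S *v v) \<bullet> (?S *v v) = 0"
    using inner_second_moment_matrix[where X=C and K=K and a="?S *v v" and b=v, OF sqC]
    by (simp add: vC)
  then have "?S *v v = 0 *\<^sub>R v" by simp
  then show "lambda_max ?S \<le> trace ?S"
    by (rule lambda_max_second_moment_le_trace[OF sqC v(1)])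
  have "(\<Sum>s<K. \<integral>x. (norm (C s x))\<^sup>2 \<partial>M) = (\<integral>x. (\<Sum>s<K. (norm (C s x))\<^sup>2) \<partial>M)"
    using integrable_norm_square[OF sqC] by simp
  also have "\<dots> \<le> (\<integral>x. (\<Sum>s<K. (norm (X s x))\<^sup>2) \<partial>M)"
    unfolding C_def
    by (intro integral_mono Bochner_Integration.integrable_sum integrable_norm_square sq sqC[unfolded C_def]
        sum_norm_centered_le)
  also have "\<dots> = (\<Sum>s<K. \<integral>x. (norm (X s x))\<^sup>2 \<partial>M)"
    using integrable_norm_square[OF sq] by simp
  finally show "trace ?S \<le> (1 / real K) * (\<Sum>s<K. \<integral>x. (norm (X s x))\<^sup>2 \<partial>M)"
    by (simp add: trace_second_moment_matrix[OF sqC] divide_right_mono)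
qed

section \<open>Orthonormal expansions and a double-sum identity\<close>

lemma orthonormal_complement_expansion:
  fixes v y :: "real^'n" and u :: "'j \<Rightarrow> real^'n"
  assumes J: "finite J" "card J + 1 = CARD('n)" and v: "norm v = 1"
    and orth: "\<And>i j. i \<in> J \<Longrightarrow> j \<in> J \<Longrightarrow> u i \<bullet> u j = (if i = j then 1 else 0)"
    and perp: "\<And>j. j \<in> J \<Longrightarrow> u j \<bullet> v = 0"
    and y: "v \<bullet> y = 0"
  shows "y = (\<Sum>j\<in>J. (u j \<bullet> y) *\<^sub>R u j)"
proof -
  define B where "B = insert v (u ` J)"
  have vv: "v \<bullet> v = 1" using v by (simp add: norm_eq_sqrt_inner)
  have inj: "inj_on u J"
    by (rule inj_onI) (metis orth zero_neq_one)
  have v_notin: "v \<notin> u ` J"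
    using perp vv by force
  have B_orthonormal: "a \<bullet> b = (if a = b then 1 else 0)" if "a \<in> B" "b \<in> B" for a b
    using that orth perp vv unfolding B_def by (auto simp: inner_commute)
  have "pairwise orthogonal B"
    using B_orthonormal by (auto simp: pairwise_def orthogonal_def)
  moreover have norm_B: "norm b = 1" if "b \<in> B" for b
    using B_orthonormal[OF that that] by (simp add: norm_eq_sqrt_inner)
  ultimately have "independent B"
    by (metis pairwise_orthogonal_independent norm_zero zero_neq_one)
  moreover have "card B = CARD('n)"
    using J inj v_notin by (simp add: B_def card_image)
  then have "dim (UNIV :: (real^'n) set) \<le> card B" by simp
  ultimately have "y \<in> span B"
    using card_ge_dim_independent[OF subset_UNIV] by blast
  then have "y = (\<Sum>b\<in>B. (y \<bullet> b) *\<^sub>R b)"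
    using orthonormal_basis_expand[OF \<open>pairwise orthogonal B\<close> norm_B] J by (simp add: B_def)
  also have "\<dots> = (\<Sum>j\<in>J. (u j \<bullet> y) *\<^sub>R u j)"
    using J y v_notin by (simp add: B_def sum.reindex[OF inj] inner_commute)
  finally show ?thesis .
qed

lemma norm_square_orthonormal_complement:
  fixes v y :: "real^'n" and u :: "'j \<Rightarrow> real^'n"
  assumes J: "finite J" "card J + 1 = CARD('n)" and v: "norm v = 1"
    and orth: "\<And>i j. i \<in> J \<Longrightarrow> j \<in> J \<Longrightarrow> u i \<bullet> u j = (if i = j then 1 else 0)"
    and perp: "\<And>j. j \<in> J \<Longrightarrow> u j \<bullet> v = 0"
    and y: "v \<bullet> y = 0"
  shows "(norm y)\<^sup>2 = (\<Sum>j\<in>J. (u j \<bullet> y)\<^sup>2)"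
proof -
  have "(norm y)\<^sup>2 = y \<bullet> (\<Sum>j\<in>J. (u j \<bullet> y) *\<^sub>R u j)"
    using orthonormal_complement_expansion[OF assms] by (metis power2_norm_eq_inner)
  then show ?thesis
    by (simp add: inner_sum_right power2_eq_square inner_commute)
qed

lemma sum_sum_kernel_max_min:
  fixes f :: "nat \<Rightarrow> real"
  shows "(\<Sum>i<N. \<Sum>i'<N. f (max i i' - min i i'))
           = real N * f 0 + 2 * (\<Sum>r=1..N-1. real (N - r) * f r)"
proof (induction N)
  case (Suc N)
  have new_terms: "(\<Sum>i<N. f (max i N - min i N)) = (\<Sum>r=1..N. f r)"
    by (rule sum.reindex_bij_witness[of _ "\<lambda>r. N - r" "\<lambda>i. N - i"]) auto
  have "(\<Sum>i<Suc N. \<Sum>i'<Suc N. f (max i i' - min i i'))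
      = (\<Sum>i<N. \<Sum>i'<N. f (max i i' - min i i')) + 2 * (\<Sum>r=1..N. f r) + f 0"
    using new_terms by (simp add: sum.distrib max.commute min.commute)
  moreover have "(\<Sum>r=1..N. real (Suc N - r) * f r) = (\<Sum>r=1..N-1. real (N - r) * f r) + (\<Sum>r=1..N. f r)"
  proof -
    have "(\<Sum>r=1..N. real (Suc N - r) * f r) = (\<Sum>r=1..N. real (N - r) * f r + f r)"
      by (rule sum.cong) (auto simp: Suc_diff_le algebra_simps)
    moreover have "(\<Sum>r=1..N. real (N - r) * f r) = (\<Sum>r=1..N-1. real (N - r) * f r)"
      by (cases N) (simp_all add: atLeastAtMostSuc_conv)
    ultimately show ?thesis by (simp add: sum.distrib)
  qed
  ultimately show ?case using Suc.IH by (simp add: algebra_simps)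
qed simp

section \<open>SGD in the mountain directions\<close>

lemma borel_measurable_matrix_vector_mult[measurable]:
  fixes f :: "'a \<Rightarrow> real^'n" and A :: "real^'n^'m"
  assumes "f \<in> borel_measurable M"
  shows "(\<lambda>x. A *v f x) \<in> borel_measurable M"
  using measurable_compose[OF assms borel_measurable_continuous_onI[OF
        matrix_vector_mult_linear_continuous_on]] .

lemma (in prob_space) indep_var_cong_space:
  assumes "indep_var N1 X N2 Y"
    and "\<And>x. x \<in> space M \<Longrightarrow> X x = X' x" and "\<And>x. x \<in> space M \<Longrightarrow> Y x = Y' x"
  shows "indep_var N1 X' N2 Y'"
proof -
  have "case_bool X' Y' b -` A \<inter> space M = case_bool X Y b -` A \<inter> space M" for b A
    using assms(2,3) by (cases b) auto
  moreover have "case_bool X' Y' b \<in> measurable M (case_bool N1 N2 b)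
      \<longleftrightarrow> case_bool X Y b \<in> measurable M (case_bool N1 N2 b)" for b
    using assms(2,3) by (cases b) (auto intro!: measurable_cong)
  ultimately show ?thesis
    using assms(1) unfolding indep_var_def indep_vars_def by simp
qed

locale mountain_sgd = prob_space M for M :: "'w measure" +
  fixes v wstar :: "real^'n" and H :: "real^'n^'n"
    and l l' :: "real \<Rightarrow> real" and gradL :: "real^'n \<Rightarrow> real^'n"
    and J :: "'j set" and lam :: "'j \<Rightarrow> real" and u :: "'j \<Rightarrow> real^'n"
    and eta muF sigma :: real
    and w g :: "nat \<Rightarrow> 'w \<Rightarrow> real^'n"
    and k0 :: nat
  assumes unit_v: "norm v = 1"
    and l_deriv: "\<And>t. (l has_real_derivative l' t) (at t)"
    and H_sym: "transpose H = H"
    and H_PS: "H ** PS v = H" and PS_H: "PS v ** H = H"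
    and finite_J: "finite J" and card_J: "card J + 1 = CARD('n)"
    and u_orthonormal: "\<And>i j. i \<in> J \<Longrightarrow> j \<in> J \<Longrightarrow> u i \<bullet> u j = (if i = j then 1 else 0)"
    and u_perp: "\<And>j. j \<in> J \<Longrightarrow> u j \<bullet> v = 0"
    and u_eigen: "\<And>j. j \<in> J \<Longrightarrow> H *v u j = lam j *\<^sub>R u j"
    and step_stable: "\<And>j. j \<in> J \<Longrightarrow> 0 < eta * lam j \<and> eta * lam j < 2"
    and grad: "\<And>x. (lossL l v H wstar has_derivative (\<lambda>h. gradL x \<bullet> h)) (at x)"
    and eta_pos: "0 < eta" and sigma_pos: "0 < sigma"
    and w0_measurable: "w 0 \<in> borel_measurable M"
    and sgd: "\<And>k x. x \<in> space M \<Longrightarrow>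
                 w (Suc k) x = w k x - eta *\<^sub>R gradL (w k x) - (eta * muF) *\<^sub>R v + eta *\<^sub>R g k x"
    and indep: "indep_vars (\<lambda>_. borel) (\<lambda>i. case i of None \<Rightarrow> w 0 | Some k \<Rightarrow> g k) UNIV"
    and g_gauss: "\<And>k a. PS v *v a \<noteq> 0 \<Longrightarrow>
                   distributed M lborel (\<lambda>x. a \<bullet> g k x) (normal_density 0 (sigma * norm (PS v *v a)))"
    and stationary: "\<And>k. k0 \<le> k \<Longrightarrow>
                   distr M borel (\<lambda>x. PS v *v (w k x - wstar)) = distr M borel (\<lambda>x. PS v *v (w k0 x - wstar))"
begin

definition mountain_err :: "nat \<Rightarrow> 'w \<Rightarrow> real^'n" where
  "mountain_err k x = PS v *v (w k x - wstar)"

definition coord :: "'j \<Rightarrow> nat \<Rightarrow> 'w \<Rightarrow> real" where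
  "coord j k x = u j \<bullet> mountain_err k x"

definition innov :: "'j \<Rightarrow> nat \<Rightarrow> 'w \<Rightarrow> real" where
  "innov j k x = eta * (u j \<bullet> g k x)"

definition ar_coeff :: "'j \<Rightarrow> real" where
  "ar_coeff j = 1 - eta * lam j"

definition stationary_sd :: "'j \<Rightarrow> real" where
  "stationary_sd j = eta * sigma / sqrt (1 - (ar_coeff j)\<^sup>2)"

lemma PS_v: "PS v *v v = 0"
  using unit_v by (simp add: PS_mult_vec norm_eq_sqrt_inner)

lemma PS_u: "j \<in> J \<Longrightarrow> PS v *v u j = u j"
  using u_perp[of j] by (simp add: PS_mult_vec inner_commute)

lemma norm_u: "j \<in> J \<Longrightarrow> norm (u j) = 1"
  using u_orthonormal[of j j] by (simp add: norm_eq_sqrt_inner)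

lemma g_measurable[measurable]: "g k \<in> borel_measurable M"
  using indep unfolding indep_vars_def by (metis UNIV_I option.simps(5))

lemma mountain_err_Suc:
  assumes "x \<in> space M"
  shows "mountain_err (Suc k) x
           = mountain_err k x - eta *\<^sub>R (H *v mountain_err k x) + eta *\<^sub>R (PS v *v g k x)"
proof -
  have grad_eq: "gradL y = l' (v \<bullet> (y - wstar)) *\<^sub>R v + H *v (y - wstar)" for y
    by (rule gradient_unique[OF grad has_derivative_lossL[OF l_deriv H_sym H_PS PS_H]])
  have PS_grad: "PS v *v gradL y = H *v (PS v *v (y - wstar))" for y
    by (simp add: grad_eq matrix_vector_right_distrib matrix_vector_mult_scaleR PS_v
        matrix_vector_mul_assoc PS_H H_PS)
  have "w (Suc k) x - wstar
      = (w k x - wstar) - eta *\<^sub>R gradL (w k x) - (eta * muF) *\<^sub>R v + eta *\<^sub>R g k x"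
    using sgd[OF assms] by (simp add: algebra_simps)
  then show ?thesis
    by (simp add: mountain_err_def matrix_vector_mult_diff_distrib matrix_vector_right_distrib
        matrix_vector_mult_scaleR PS_v PS_grad)
qed

lemma mountain_err_measurable[measurable]: "mountain_err k \<in> borel_measurable M"
proof (induction k)
  case 0
  show ?case unfolding mountain_err_def[abs_def] using w0_measurable by measurable
next
  case (Suc k)
  have "(\<lambda>x. mountain_err k x - eta *\<^sub>R (H *v mountain_err k x) + eta *\<^sub>R (PS v *v g k x))
          \<in> borel_measurable M"
    using Suc by measurable
  then show ?case
    by (rule measurable_cong[THEN iffD1, rotated]) (simp add: mountain_err_Suc)
qed

lemma coord_measurable[measurable]: "coord j k \<in> borel_measurable M"
  unfolding coord_def[abs_def] by measurable

lemma ar_coeff_abs: "j \<in> J \<Longrightarrow> \<bar>ar_coeff j\<bar> < 1"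
  using step_stable[of j] by (auto simp: ar_coeff_def)

lemma coord_Suc:
  assumes "x \<in> space M" "j \<in> J"
  shows "coord j (Suc k) x = ar_coeff j * coord j k x + innov j k x"
proof -
  have "u j \<bullet> (H *v mountain_err k x) = lam j * coord j k x"
    using inner_matrix_symmetric[OF H_sym, of "u j"] u_eigen[OF assms(2)] by (simp add: coord_def)
  moreover have "u j \<bullet> (PS v *v g k x) = u j \<bullet> g k x"
    using inner_PS_commute[of v "u j" "g k x"] PS_u[OF assms(2)] by simp
  ultimately show ?thesis
    unfolding coord_def innov_def ar_coeff_def mountain_err_Suc[OF assms(1)]
    by (simp add: inner_diff_right inner_add_right algebra_simps coord_def)
qed

lemma coord_closed_form:
  assumes "x \<in> space M" "j \<in> J"
  shows "coord j k x = ar_coeff j ^ k * coord j 0 x + (\<Sum>i<k. ar_coeff j ^ (k - 1 - i) * innov j i x)"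
proof (induction k)
  case (Suc k)
  have "(\<Sum>i<Suc k. ar_coeff j ^ (Suc k - 1 - i) * innov j i x)
      = ar_coeff j * (\<Sum>i<k. ar_coeff j ^ (k - 1 - i) * innov j i x) + innov j k x"
    by (simp add: sum_distrib_left)
       (intro sum.cong refl, simp add: Suc_diff_Suc flip: mult.assoc power_Suc)
  then show ?case
    using Suc coord_Suc[OF assms] by (simp add: algebra_simps)
qed simp

lemma indep_coord_innov:
  assumes j: "j \<in> J" and "k \<le> m"
  shows "indep_var borel (coord j k) borel (innov j m)"
proof -
  \<comment> \<open>coord j k is a function of w 0, g 0, ..., g (k - 1) only (coord_closed_form)\<close>
  define Y where "Y = (\<lambda>i. case i of None \<Rightarrow> w 0 | Some k \<Rightarrow> g k)"
  define A where "A = insert None (Some ` {..<k})"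
  define B where "B = {Some m}"
  have "A \<inter> B = {}" using \<open>k \<le> m\<close> by (auto simp: A_def B_def)
  then have "indep_var (PiM A (\<lambda>_. borel)) (\<lambda>x. restrict (\<lambda>i. Y i x) A)
                       (PiM B (\<lambda>_. borel)) (\<lambda>x. restrict (\<lambda>i. Y i x) B)"
    by (intro indep_var_restrict[OF indep[folded Y_def]]) auto
  moreover define F where "F f = ar_coeff j ^ k * (u j \<bullet> (PS v *v (f None - wstar)))
      + (\<Sum>i<k. ar_coeff j ^ (k - 1 - i) * (eta * (u j \<bullet> f (Some i))))" for f :: "_ \<Rightarrow> real^'n"
  moreover define G where "G f = eta * (u j \<bullet> f (Some m))" for f :: "_ \<Rightarrow> real^'n"
  moreover have "F \<in> borel_measurable (PiM A (\<lambda>_. borel))"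
    unfolding F_def[abs_def] A_def by measurable
  moreover have "G \<in> borel_measurable (PiM B (\<lambda>_. borel))"
    unfolding G_def[abs_def] B_def by measurable
  ultimately have "indep_var borel (F \<circ> (\<lambda>x. restrict (\<lambda>i. Y i x) A)) borel (G \<circ> (\<lambda>x. restrict (\<lambda>i. Y i x) B))"
    by (intro indep_var_compose)
  moreover have "(F \<circ> (\<lambda>x. restrict (\<lambda>i. Y i x) A)) x = coord j k x"
    and "(G \<circ> (\<lambda>x. restrict (\<lambda>i. Y i x) B)) x = innov j m x" if "x \<in> space M" for x
    using coord_closed_form[OF that j, of k]
    by (simp_all add: F_def G_def A_def B_def Y_def innov_def coord_def mountain_err_def)
  ultimately show ?thesis
    by (rule indep_var_cong_space)
qed

lemma innov_gaussian:
  assumes "j \<in> J"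
  shows "distributed M lborel (innov j k) (normal_density 0 (eta * sigma))"
proof -
  have "distributed M lborel (\<lambda>x. u j \<bullet> g k x) (normal_density 0 sigma)"
    using g_gauss[of "u j" k] PS_u[OF assms] norm_u[OF assms] by fastforce
  from normal_density_affine[OF this sigma_pos, of eta 0]
  show ?thesis using eta_pos by (simp add: innov_def[abs_def])
qed

lemma innov_integrable: "j \<in> J \<Longrightarrow> integrable M (innov j k)"
  by (rule distributed_integrable_var[OF innov_gaussian])
     (simp_all add: integrable_normal_moment_nz_1 eta_pos sigma_pos)

lemma innov_expectation: "j \<in> J \<Longrightarrow> expectation (innov j k) = 0"
  using normal_distributed_expectation[OF _ innov_gaussian] eta_pos sigma_pos by simp

lemma coord_distr_stationary:
  assumes "k0 \<le> k"
  shows "distr M borel (coord j k) = distr M borel (coord j k0)"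
proof -
  have [measurable]: "(\<lambda>y. u j \<bullet> y) \<in> borel_measurable (borel :: (real^'n) measure)" by measurable
  have "distr M borel (coord j k) = distr (distr M borel (mountain_err k)) borel (\<lambda>y. u j \<bullet> y)" for k
    by (subst distr_distr) (simp_all add: coord_def[abs_def] o_def)
  moreover have "distr M borel (mountain_err k) = distr M borel (mountain_err k0)"
    unfolding mountain_err_def[abs_def] using stationary[OF assms] .
  ultimately show ?thesis by simp
qed

lemma coord_gaussian:
  assumes j: "j \<in> J" and "k0 \<le> k"
  shows "distributed M lborel (coord j k) (normal_density 0 (stationary_sd j))"
proof -
  have "distr M borel (\<lambda>x. ar_coeff j * coord j k x + innov j k x) = distr M borel (coord j (Suc k))"
    by (rule distr_cong) (simp_all add: coord_Suc[OF _ j])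
  also have "\<dots> = distr M borel (coord j k)"
    using coord_distr_stationary[of "Suc k" j] coord_distr_stationary[of k j] \<open>k0 \<le> k\<close> by simp
  finally have "distr M borel (\<lambda>x. ar_coeff j * coord j k x + innov j k x) = distr M borel (coord j k)" .
  from stationary_AR1_gaussian[OF coord_measurable innov_gaussian[OF j] _
      indep_coord_innov[OF j order_refl] this ar_coeff_abs[OF j]]
  show ?thesis
    unfolding stationary_sd_def using eta_pos sigma_pos by simp
qed

lemma stationary_sd_pos: "j \<in> J \<Longrightarrow> 0 < stationary_sd j"
  using ar_coeff_abs[of j] eta_pos sigma_pos by (simp add: stationary_sd_def abs_square_less_1)

lemma stationary_sd_square:
  assumes "j \<in> J"
  shows "(stationary_sd j)\<^sup>2 = eta * sigma\<^sup>2 / (2 * lam j - eta * (lam j)\<^sup>2)"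
proof -
  have pos: "0 < 1 - (ar_coeff j)\<^sup>2"
    using ar_coeff_abs[OF assms] by (simp add: abs_square_less_1)
  have "(stationary_sd j)\<^sup>2 = (eta * sigma)\<^sup>2 / (1 - (ar_coeff j)\<^sup>2)"
    using pos by (simp add: stationary_sd_def power_divide)
  also have "1 - (ar_coeff j)\<^sup>2 = eta * (2 * lam j - eta * (lam j)\<^sup>2)"
    by (simp add: ar_coeff_def power2_eq_square algebra_simps)
  finally show ?thesis
    using eta_pos by (simp add: power2_eq_square)
qed

lemma coord_second_moment:
  assumes j: "j \<in> J" and k: "k0 \<le> k"
  shows "square_integrable M (coord j k)" and "(\<integral>x. (coord j k x)\<^sup>2 \<partial>M) = (stationary_sd j)\<^sup>2"
proof -
  note D = coord_gaussian[OF j k]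
  have "integrable lborel (\<lambda>x. normal_density 0 (stationary_sd j) x * (x - 0) ^ 2)"
    using stationary_sd_pos[OF j] by (rule integrable_normal_moment)
  then show "square_integrable M (coord j k)"
    using distributed_integrable[OF D, of "\<lambda>x. x\<^sup>2"] by (simp add: square_integrable_def)
  have "(\<integral>x. (coord j k x)\<^sup>2 \<partial>M) = (\<integral>x. normal_density 0 (stationary_sd j) x * (x - 0) ^ (2 * 1) \<partial>lborel)"
    using distributed_integral[OF D, of "\<lambda>x. x\<^sup>2"] by simp
  also have "\<dots> = (stationary_sd j)\<^sup>2"
    using integral_normal_moment_even[OF stationary_sd_pos[OF j], of 0 1] by simp
  finally show "(\<integral>x. (coord j k x)\<^sup>2 \<partial>M) = (stationary_sd j)\<^sup>2" .
qed

lemma coord_covariance: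
  assumes j: "j \<in> J" and k: "k0 \<le> k"
  shows "(\<integral>x. coord j k x * coord j (k + m) x \<partial>M) = ar_coeff j ^ m * (stationary_sd j)\<^sup>2"
proof (induction m)
  case 0
  then show ?case using coord_second_moment(2)[OF j k] by (simp add: power2_eq_square)
next
  case (Suc m)
  have sq: "square_integrable M (coord j k')" if "k0 \<le> k'" for k'
    by (rule coord_second_moment(1)[OF j that])
  have ind: "indep_var borel (coord j k) borel (innov j (k + m))"
    by (rule indep_coord_innov[OF j]) simp
  have int_k: "integrable M (coord j k)"
    using sq[OF k] by (simp add: square_integrable_def square_integrable_imp_integrable)
  have "(\<integral>x. coord j k x * coord j (k + Suc m) x \<partial>M)
      = (\<integral>x. ar_coeff j * (coord j k x * coord j (k + m) x) + coord j k x * innov j (k + m) x \<partial>M)"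
    by (rule Bochner_Integration.integral_cong) (simp_all add: coord_Suc[OF _ j] algebra_simps)
  also have "\<dots> = ar_coeff j * (\<integral>x. coord j k x * coord j (k + m) x \<partial>M)
                  + (\<integral>x. coord j k x * innov j (k + m) x \<partial>M)"
    using integrable_mult_square_integrable[OF sq sq, of k "k + m"] k
      indep_var_integrable[OF ind int_k innov_integrable[OF j]] by simp
  also have "(\<integral>x. coord j k x * innov j (k + m) x \<partial>M) = 0"
    using indep_var_lebesgue_integral[OF ind int_k innov_integrable[OF j]] innov_expectation[OF j] by simp
  finally show ?case using Suc by simp
qed

lemma coord_covariance_max_min:
  assumes "j \<in> J" "k0 \<le> k" "k0 \<le> k'"
  shows "(\<integral>x. coord j k x * coord j k' x \<partial>M) = ar_coeff j ^ (max k k' - min k k') * (stationary_sd j)\<^sup>2"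
proof (cases "k \<le> k'")
  case True
  then show ?thesis using coord_covariance[OF assms(1,2), of "k' - k"] by simp
next
  case False
  then show ?thesis using coord_covariance[OF assms(1,3), of "k - k'"] by (simp add: mult.commute)
qed

definition window_err :: "nat \<Rightarrow> nat \<Rightarrow> nat \<Rightarrow> 'w \<Rightarrow> real^'n" where
  "window_err N T s x = PS v *v ((1 / real N) *\<^sub>R (\<Sum>i<N. w (k0 + (s + i) * T) x) - wstar)"

lemma inner_window_err:
  assumes "1 \<le> N"
  shows "u j \<bullet> window_err N T s x = (1 / real N) * (\<Sum>i<N. coord j (k0 + (s + i) * T) x)"
proof -
  have "(1 / real N) *\<^sub>R (\<Sum>i<N. w (k0 + (s + i) * T) x) - wstar
      = (1 / real N) *\<^sub>R (\<Sum>i<N. w (k0 + (s + i) * T) x - wstar)"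
    using assms by (simp add: sum_subtractf scaleR_diff_right sum_constant_scaleR del: sum_constant)
  then show ?thesis
    by (simp add: window_err_def coord_def mountain_err_def matrix_vector_mult_scaleR
        linear_sum[OF matrix_vector_mul_linear] o_def inner_sum_right sum_distrib_left)
qed

lemma v_inner_window_err: "v \<bullet> window_err N T s x = 0"
  using inner_PS_commute[of v v] PS_v by (simp add: window_err_def)

lemma window_coord_square_integrable:
  assumes "j \<in> J" "1 \<le> N"
  shows "square_integrable M (\<lambda>x. u j \<bullet> window_err N T s x)"
  unfolding inner_window_err[OF assms(2)]
  by (intro square_integrable_scale square_integrable_sum coord_second_moment(1)[OF assms(1)]) simp

lemma window_err_component_square_integrable:
  assumes "1 \<le> N"
  shows "square_integrable M (\<lambda>x. window_err N T s x $ i)"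
proof -
  have "window_err N T s x $ i = (\<Sum>j\<in>J. u j $ i * (u j \<bullet> window_err N T s x))" for x
    using arg_cong[OF orthonormal_complement_expansion[OF finite_J card_J unit_v u_orthonormal u_perp
        v_inner_window_err], of "\<lambda>z. z $ i"]
    by (simp add: sum_component mult.commute)
  then show ?thesis
    by (simp only:) (intro square_integrable_sum square_integrable_scale window_coord_square_integrable assms)
qed

lemma window_coord_second_moment:
  assumes j: "j \<in> J" and N: "1 \<le> N"
  shows "(\<integral>x. (u j \<bullet> window_err N T s x)\<^sup>2 \<partial>M)
           = (eta * sigma\<^sup>2 / (2 * lam j - eta * (lam j)\<^sup>2)) * (1 / (real N)\<^sup>2)
               * (real N + 2 * (\<Sum>r=1..N-1. real (N - r) * (1 - eta * lam j) ^ (r * T)))"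
proof -
  define \<kappa> where "\<kappa> i = k0 + (s + i) * T" for i
  define f where "f r = ar_coeff j ^ (r * T) * (stationary_sd j)\<^sup>2" for r
  have k: "k0 \<le> \<kappa> i" for i by (simp add: \<kappa>_def)
  have gap: "max (\<kappa> i) (\<kappa> i') - min (\<kappa> i) (\<kappa> i') = (max i i' - min i i') * T" for i i'
    by (cases "i \<le> i'") (simp_all add: \<kappa>_def max_def min_def add_mult_distrib diff_mult_distrib)
  have cov: "(\<integral>x. coord j (\<kappa> i) x * coord j (\<kappa> i') x \<partial>M) = f (max i i' - min i i')" for i i'
    unfolding coord_covariance_max_min[OF j k k] gap f_def ..
  have "(\<lambda>x. (u j \<bullet> window_err N T s x)\<^sup>2)
      = (\<lambda>x. (1 / real N)\<^sup>2 * (\<Sum>i<N. \<Sum>i'<N. coord j (\<kappa> i) x * coord j (\<kappa> i') x))"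
    by (simp add: inner_window_err[OF N] \<kappa>_def power_mult_distrib power2_eq_square sum_product)
  then have "(\<integral>x. (u j \<bullet> window_err N T s x)\<^sup>2 \<partial>M)
      = (1 / real N)\<^sup>2 * (\<Sum>i<N. \<Sum>i'<N. f (max i i' - min i i'))"
    using integrable_mult_square_integrable[OF coord_second_moment(1)[OF j k] coord_second_moment(1)[OF j k]]
    by (simp add: cov)
  also have "\<dots> = (1 / real N)\<^sup>2 * ((stationary_sd j)\<^sup>2
      * (real N + 2 * (\<Sum>r=1..N-1. real (N - r) * ar_coeff j ^ (r * T))))"
    unfolding sum_sum_kernel_max_min
    by (simp add: f_def sum_distrib_left sum_distrib_right distrib_left mult_ac)
  finally show ?thesis
    by (simp add: stationary_sd_square[OF j] ar_coeff_def power_one_over mult_ac)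
qed

lemma window_err_second_moment:
  assumes N: "1 \<le> N"
  shows "(\<integral>x. (norm (window_err N T s x))\<^sup>2 \<partial>M)
           = (\<Sum>j\<in>J. (eta * sigma\<^sup>2 / (2 * lam j - eta * (lam j)\<^sup>2)) * (1 / (real N)\<^sup>2)
               * (real N + 2 * (\<Sum>r=1..N-1. real (N - r) * (1 - eta * lam j) ^ (r * T))))"
proof -
  have "(\<lambda>x. (norm (window_err N T s x))\<^sup>2) = (\<lambda>x. \<Sum>j\<in>J. (u j \<bullet> window_err N T s x)\<^sup>2)"
    using norm_square_orthonormal_complement[OF finite_J card_J unit_v u_orthonormal u_perp
        v_inner_window_err] by simp
  moreover have "integrable M (\<lambda>x. (u j \<bullet> window_err N T s x)\<^sup>2)" if "j \<in> J" for j
    using window_coord_square_integrable[OF that N] by (simp add: square_integrable_def)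
  ultimately show ?thesis
    by (simp add: window_coord_second_moment[OF _ N])
qed

end

lemma step_size_stable:
  fixes eta mu LS lam :: real
  assumes "0 < mu" "mu \<le> lam" "lam \<le> LS" "0 < eta" "eta < 2 / LS"
  shows "0 < eta * lam \<and> eta * lam < 2"
proof -
  have "eta * lam \<le> eta * LS" using assms(3,4) by simp
  moreover have "eta * LS < 2" using assms by (simp add: field_simps)
  moreover have "0 < eta * lam" using assms(1,2,4) by simp
  ultimately show ?thesis by linarith
qed

theorem mainTheorem3:
  fixes v wstar :: "real^'n" and H :: "real^'n^'n"
    and l l' l'' :: "real \<Rightarrow> real" and gradL :: "real^'n \<Rightarrow> real^'n"
    and lam :: "nat \<Rightarrow> real" and u :: "nat \<Rightarrow> real^'n"
    and mu LS eta muF sigma :: real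
    and M :: "'w measure"
    and w g :: "nat \<Rightarrow> 'w \<Rightarrow> real^'n"
    and k0 T N K :: nat
  assumes dim: "CARD('n) \<ge> 2"
    and unit_v: "norm v = 1"
    and l_d1: "\<And>x. (l has_real_derivative l' x) (at x)"
    and l_d2: "\<And>x. (l' has_real_derivative l'' x) (at x)"
    and l_C2: "continuous_on UNIV l''"
    and H_sym: "transpose H = H"
    and H_psd: "\<And>x. 0 \<le> x \<bullet> (H *v x)"
    and H_PF: "H ** PF v = 0"
    and H_PS: "H ** PS v = H" and PS_H: "PS v ** H = H"
    and mu_pos: "0 < mu" and mu_LS: "mu \<le> LS"
    and eig_orth: "\<And>i j. i \<in> {1..CARD('n)-1} \<Longrightarrow> j \<in> {1..CARD('n)-1} \<Longrightarrow>
                     u i \<bullet> u j = (if i = j then 1 else 0)"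
    and eig_perp: "\<And>j. j \<in> {1..CARD('n)-1} \<Longrightarrow> u j \<bullet> v = 0"
    and eig_vec: "\<And>j. j \<in> {1..CARD('n)-1} \<Longrightarrow> H *v u j = lam j *\<^sub>R u j"
    and eig_range: "\<And>j. j \<in> {1..CARD('n)-1} \<Longrightarrow> mu \<le> lam j \<and> lam j \<le> LS"
    and grad: "\<And>x. (lossL l v H wstar has_derivative (\<lambda>h. gradL x \<bullet> h)) (at x)"
    and eta_pos: "0 < eta" and eta_lt: "eta < 2 / LS"
    and muF_pos: "0 < muF"
    and sigma_pos: "0 < sigma"
    and prob: "prob_space M"
    and w0_meas: "w 0 \<in> borel_measurable M"
    and sgd: "\<And>k x. x \<in> space M \<Longrightarrow>
                 w (Suc k) x = w k x - eta *\<^sub>R gradL (w k x) - (eta * muF) *\<^sub>R v + eta *\<^sub>R g k x"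
    and indep: "prob_space.indep_vars M (\<lambda>_. borel)
                  (\<lambda>i. case i of None \<Rightarrow> w 0 | Some k \<Rightarrow> g k) UNIV"
    and g_ident: "\<And>k. distr M borel (g k) = distr M borel (g 0)"
    and g_flat: "\<And>k. AE x in M. v \<bullet> g k x = 0"
    and g_gauss: "\<And>k a. PS v *v a \<noteq> 0 \<Longrightarrow>
                   distributed M lborel (\<lambda>x. a \<bullet> g k x)
                     (normal_density 0 (sigma * norm (PS v *v a)))"
    and stationary: "\<And>k. k \<ge> k0 \<Longrightarrow>
                   distr M borel (\<lambda>x. PS v *v (w k x - wstar)) = distr M borel (\<lambda>x. PS v *v (w k0 x - wstar))"
    and N_pos: "N \<ge> 1" and K_pos: "K \<ge> 1"
  shows
    "let ckpt = (\<lambda>m x. w (k0 + m * T) x);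
         wbar = (\<lambda>s x. (1 / real N) *\<^sub>R (\<Sum>i<N. ckpt (s + i) x));
         eps = (\<lambda>s x. PS v *v (wbar s x - wstar));
         epsc = (\<lambda>s x. eps s x - (1 / real K) *\<^sub>R (\<Sum>r<K. eps r x));
         Sigma = (\<chi> i j. (1 / real K) * (\<Sum>s<K. integral\<^sup>L M (\<lambda>x. epsc s x $ i * epsc s x $ j)))
     in lambda_max Sigma \<le> trace Sigma
      \<and> trace Sigma \<le> (1 / real K) * (\<Sum>s<K. integral\<^sup>L M (\<lambda>x. (norm (eps s x))\<^sup>2))
      \<and> (1 / real K) * (\<Sum>s<K. integral\<^sup>L M (\<lambda>x. (norm (eps s x))\<^sup>2))
          = (1 / real K) * (\<Sum>s<K. integral\<^sup>L M (\<lambda>x. (Dist v wstar (wbar s x))\<^sup>2))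
      \<and> (1 / real K) * (\<Sum>s<K. integral\<^sup>L M (\<lambda>x. (Dist v wstar (wbar s x))\<^sup>2))
          = (\<Sum>j=1..CARD('n)-1. (eta * sigma\<^sup>2 / (2 * lam j - eta * (lam j)\<^sup>2))
               * (1 / (real N)\<^sup>2)
               * (real N + 2 * (\<Sum>r=1..N-1. real (N - r) * (1 - eta * lam j) ^ (r * T))))"
proof -
  let ?J = "{1..CARD('n) - 1}"
  have step_stable: "0 < eta * lam j \<and> eta * lam j < 2" if "j \<in> ?J" for j
    using step_size_stable[OF mu_pos _ _ eta_pos eta_lt] eig_range[OF that] by blast
  have "finite ?J" "card ?J + 1 = CARD('n)" by auto
  interpret mountain_sgd M v wstar H l l' gradL ?J lam u eta muF sigma w g k0
    by (intro mountain_sgd.intro mountain_sgd_axioms.intro prob)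
       (fact unit_v l_d1 H_sym H_PS PS_H \<open>finite ?J\<close> \<open>card ?J + 1 = CARD('n)\<close> eig_orth eig_perp
         eig_vec step_stable grad eta_pos sigma_pos w0_meas sgd indep g_gauss stationary)+
  have sq: "square_integrable M (\<lambda>x. window_err N T s x $ i)" for s i
    by (rule window_err_component_square_integrable[OF N_pos])
  have "v \<noteq> 0" using unit_v by auto
  note bounds =
    second_moment_centered_bounds[where X="window_err N T" and K=K, OF sq this v_inner_window_err]
  have moment: "(1 / real K) * (\<Sum>s<K. \<integral>x. (norm (window_err N T s x))\<^sup>2 \<partial>M)
      = (\<Sum>j=1..CARD('n)-1. (eta * sigma\<^sup>2 / (2 * lam j - eta * (lam j)\<^sup>2)) * (1 / (real N)\<^sup>2)
           * (real N + 2 * (\<Sum>r=1..N-1. real (N - r) * (1 - eta * lam j) ^ (r * T))))"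
    using K_pos by (simp add: window_err_second_moment[OF N_pos])
  have Dist_eq: "Dist v wstar ((1 / real N) *\<^sub>R (\<Sum>i<N. w (k0 + (s + i) * T) x))
      = norm (window_err N T s x)" for s x
    by (simp add: Dist_def window_err_def)
  show ?thesis
    unfolding Let_def Dist_eq window_err_def[symmetric] second_moment_matrix_def[symmetric]
    using bounds moment by simp
qed

end
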